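(* Let $\rho$ be a $d$-dimensional state that is diagonally dominant, i.e. $\rho_{ii}\ge\sum_{j\ne i}|\rho_{ij}|$ for all $i=1,\dots,d$. Then $\rho\in\mathrm{co}(\mathcal U)$. Consequently, every $d$-dimensional state $\rho$ with $\|\rho-\mathbb 1/d\|_{1\to1}\le1/d$ belongs to $\mathrm{co}(\mathcal U)$, where $\|X\|_{1\to1}=\max_{1\le i\le d}\sum_{j=1}^d|X_{ij}|$.
   Context: Fixed computational basis $\{|i\rangle\}_{i=1}^d$. $\mathcal U_k$ is the set of uniformly coherent states $|\Psi\rangle=k^{-1/2}\sum_{j\in J}e^{i\theta_j}|j\rangle$, $|J|=k$, $\theta_j\in\mathbb R$; $\mathcal U=\bigcup_{k=1}^d\mathcal U_k$ (as density matrices), and $\mathrm{co}(\mathcal U)$ its convex hull. *)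

theory Defs
  imports "HOL-Analysis.Analysis"
begin

text \<open>Dimension d = CARD('n); computational basis indexed by the finite type 'n.
  Matrices are complex^'n^'n, with X $ i $ j the (i,j) entry.\<close>

definition hermitian :: "complex^'n^'n \<Rightarrow> bool" where
  "hermitian A \<longleftrightarrow> (\<forall>i j. A $ i $ j = cnj (A $ j $ i))"

definition psd :: "complex^'n::finite^'n \<Rightarrow> bool" where
  "psd A \<longleftrightarrow> hermitian A \<and>
     (\<forall>v :: complex^'n. 0 \<le> Re (\<Sum>i\<in>UNIV. \<Sum>j\<in>UNIV. cnj (v $ i) * A $ i $ j * v $ j))"

definition mtrace :: "complex^'n::finite^'n \<Rightarrow> complex" where
  "mtrace A = (\<Sum>i\<in>UNIV. A $ i $ i)"

definition is_state :: "complex^'n::finite^'n \<Rightarrow> bool" where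
  "is_state A \<longleftrightarrow> psd A \<and> mtrace A = 1"

definition proj :: "complex^'n \<Rightarrow> complex^'n^'n" where
  "proj v = (\<chi> i j. v $ i * cnj (v $ j))"

definition uc_vec :: "'n::finite set \<Rightarrow> ('n \<Rightarrow> real) \<Rightarrow> complex^'n" where
  "uc_vec J \<theta> = (\<chi> i. if i \<in> J then exp (\<i> * of_real (\<theta> i)) / of_real (sqrt (real (card J))) else 0)"

text \<open>U_k and U = union over k = 1..d, as density matrices.\<close>
definition UC_k :: "nat \<Rightarrow> (complex^'n::finite^'n) set" where
  "UC_k k = {proj (uc_vec J \<theta>) | J \<theta>. card J = k}"

definition UC :: "(complex^'n::finite^'n) set" where
  "UC = (\<Union>k\<in>{1..CARD('n)}. UC_k k)"

definition diag_dominant :: "complex^'n::finite^'n \<Rightarrow> bool" where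
  "diag_dominant A \<longleftrightarrow> (\<forall>i. Re (A $ i $ i) \<ge> (\<Sum>j\<in>UNIV - {i}. norm (A $ i $ j)))"

definition norm11 :: "complex^'n::finite^'n \<Rightarrow> real" where
  "norm11 X = Max (range (\<lambda>i. \<Sum>j\<in>UNIV. norm (X $ i $ j)))"

end

theory Submission
  imports Defs
begin

text \<open>Each ordered pair i \<noteq> j gets weight |r(i,j)| on the two-level state with vector
  (exp(\<i> arg r(i,j)) |i\<rangle> + |j\<rangle>)/\<surd>2, where r = \<rho>. The pairs (i,j) and (j,i) together
  reproduce the off-diagonal entries r(i,j), r(j,i) and contribute the off-diagonal row sum
  S i = (\<Sum>j\<noteq>i. |r(i,j)|) to the diagonal entry i. The remainder r(i,i) - S i is nonnegative
  by diagonal dominance and is put on |i\<rangle>\<langle>i|, so the weights sum to the trace.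
  A state within 1/d of the maximally mixed state in the row-sum norm is diagonally dominant,
  since |r(i,i) - 1/d| + S i \<le> 1/d.\<close>

lemma exp_i_times_mult_cnj: "exp (\<i> * of_real x) * cnj (exp (\<i> * of_real x)) = 1"
  using complex_norm_square[of "exp (\<i> * of_real x)"] by (simp add: norm_exp_i_times)

lemma of_real_norm_mult_exp_Arg: "of_real (norm z) * exp (\<i> * of_real (Arg z)) = z"
  by (cases "z = 0") (auto dest: Arg_eq[symmetric])

lemma proj_uc_vec_entry:
  "proj (uc_vec J \<theta>) $ a $ b =
     (if a \<in> J \<and> b \<in> J then exp (\<i> * of_real (\<theta> a)) * cnj (exp (\<i> * of_real (\<theta> b))) / of_nat (card J) else 0)"
proof -
  define s where "s = complex_of_real (sqrt (real (card J)))"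
  have s_sq: "s * s = of_nat (card J)"
    unfolding s_def of_real_mult[symmetric] by simp
  have s_real: "cnj s = s" by (simp add: s_def)
  show ?thesis
    unfolding proj_def uc_vec_def s_def[symmetric] by (simp add: s_real s_sq)
qed

lemma proj_uc_vec_singleton: "proj (uc_vec {i} \<theta>) $ a $ b = (if a = i \<and> b = i then 1 else 0)"
  by (simp add: proj_uc_vec_entry exp_i_times_mult_cnj)

lemma proj_uc_vec_phase_doubleton:
  assumes "i \<noteq> j"
  shows "of_real (norm z) * proj (uc_vec {i, j} (\<lambda>k. if k = i then Arg z else 0)) $ a $ b =
    (if a = i \<and> b = j then z / 2 else if a = j \<and> b = i then cnj z / 2
     else if a = b \<and> a \<in> {i, j} then of_real (norm z) / 2 else 0)"
proof -
  have "cnj (of_real (norm z) * exp (\<i> * of_real (Arg z))) = cnj z"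
    by (simp only: of_real_norm_mult_exp_Arg)
  then have "of_real (norm z) * cnj (exp (\<i> * of_real (Arg z))) = cnj z"
    by simp
  then show ?thesis
    using assms of_real_norm_mult_exp_Arg[of z] exp_i_times_mult_cnj[of "Arg z"]
    by (auto simp: proj_uc_vec_entry)
qed

lemma proj_uc_vec_in_UC:
  fixes J :: "'n::finite set"
  assumes "J \<noteq> {}"
  shows "proj (uc_vec J \<theta>) \<in> (UC :: (complex^'n^'n) set)"
proof -
  have "card J \<in> {1..CARD('n)}"
    using assms by (auto simp: Suc_le_eq card_gt_0_iff card_mono)
  moreover have "proj (uc_vec J \<theta>) \<in> UC_k (card J)"
    unfolding UC_k_def by blast
  ultimately show ?thesis unfolding UC_def by blast
qed

lemma sum_pair_row:
  "(\<Sum>p\<in>UNIV. if fst p = a \<and> snd p \<in> B then g p else 0) = (\<Sum>j\<in>B. g (a, j))"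
  for g :: "'a::finite \<times> 'b::finite \<Rightarrow> 'c::comm_monoid_add"
proof -
  have "{p. fst p = a \<and> snd p \<in> B} = Pair a ` B" by auto
  then show ?thesis by (simp add: sum.If_cases sum.reindex inj_on_def)
qed

lemma sum_pair_column:
  "(\<Sum>p\<in>UNIV. if snd p = b \<and> fst p \<in> A then g p else 0) = (\<Sum>i\<in>A. g (i, b))"
  for g :: "'a::finite \<times> 'b::finite \<Rightarrow> 'c::comm_monoid_add"
proof -
  have "{p. snd p = b \<and> fst p \<in> A} = (\<lambda>i. (i, b)) ` A" by auto
  then show ?thesis by (simp add: sum.If_cases sum.reindex inj_on_def)
qed

definition diag_dom_weight :: "complex^'n::finite^'n \<Rightarrow> 'n \<times> 'n \<Rightarrow> real" where
  "diag_dom_weight \<rho> = (\<lambda>(i, j). if i = j then Re (\<rho> $ i $ i) - (\<Sum>k\<in>UNIV - {i}. norm (\<rho> $ i $ k))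
     else norm (\<rho> $ i $ j))"

definition diag_dom_atom :: "complex^'n::finite^'n \<Rightarrow> 'n \<times> 'n \<Rightarrow> complex^'n^'n" where
  "diag_dom_atom \<rho> = (\<lambda>(i, j). if i = j then proj (uc_vec {i} (\<lambda>_. 0))
     else proj (uc_vec {i, j} (\<lambda>k. if k = i then Arg (\<rho> $ i $ j) else 0)))"

lemma diag_dom_atom_in_UC: "diag_dom_atom \<rho> p \<in> UC"
  by (cases p) (simp add: diag_dom_atom_def proj_uc_vec_in_UC)

lemma diag_dom_weight_nonneg: "diag_dominant \<rho> \<Longrightarrow> 0 \<le> diag_dom_weight \<rho> p"
  by (cases p) (auto simp: diag_dom_weight_def diag_dominant_def)

lemma sum_diag_dom_weight: "(\<Sum>p\<in>UNIV. diag_dom_weight \<rho> p) = Re (mtrace \<rho>)"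
proof -
  have row: "(\<Sum>j\<in>UNIV. diag_dom_weight \<rho> (i, j)) = Re (\<rho> $ i $ i)" for i
  proof -
    have "(\<Sum>j\<in>UNIV - {i}. diag_dom_weight \<rho> (i, j)) = (\<Sum>j\<in>UNIV - {i}. norm (\<rho> $ i $ j))"
      by (rule sum.cong) (auto simp: diag_dom_weight_def)
    then show ?thesis
      by (simp add: sum.remove[of UNIV i] diag_dom_weight_def)
  qed
  have "(\<Sum>p\<in>UNIV. diag_dom_weight \<rho> p) = (\<Sum>i\<in>UNIV. \<Sum>j\<in>UNIV. diag_dom_weight \<rho> (i, j))"
    by (simp add: sum.cartesian_product UNIV_Times_UNIV)
  then show ?thesis by (simp add: row mtrace_def)
qed

lemma diag_dom_term_offdiag_entry:
  assumes "hermitian \<rho>" and "a \<noteq> b"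
  shows "of_real (diag_dom_weight \<rho> p) * diag_dom_atom \<rho> p $ a $ b =
    (if p = (a, b) then \<rho> $ a $ b / 2 else 0) + (if p = (b, a) then \<rho> $ a $ b / 2 else 0)"
  using assms proj_uc_vec_phase_doubleton[of "fst p" "snd p" "\<rho> $ fst p $ snd p" a b]
proof -
  obtain i j where p: "p = (i, j)" by fastforce
  show ?thesis
  proof (cases "i = j")
    case True
    then have "diag_dom_atom \<rho> p $ a $ b = 0" "p \<noteq> (a, b)" "p \<noteq> (b, a)"
      using assms(2) by (auto simp: p diag_dom_atom_def proj_uc_vec_singleton)
    then show ?thesis by simp
  next
    case False
    have "cnj (\<rho> $ i $ j) = \<rho> $ j $ i"
      using assms(1) unfolding hermitian_def by (metis complex_cnj_cnj)
    then show ?thesis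
      using False assms(2)
      by (auto simp: p diag_dom_weight_def diag_dom_atom_def proj_uc_vec_phase_doubleton)
  qed
qed

lemma diag_dom_term_diag_entry:
  "of_real (diag_dom_weight \<rho> p) * diag_dom_atom \<rho> p $ a $ a =
    (if p = (a, a) then of_real (diag_dom_weight \<rho> (a, a)) else 0)
    + (if fst p = a \<and> snd p \<in> UNIV - {a} then of_real (norm (\<rho> $ fst p $ snd p)) / 2 else 0)
    + (if snd p = a \<and> fst p \<in> UNIV - {a} then of_real (norm (\<rho> $ fst p $ snd p)) / 2 else 0)"
  using proj_uc_vec_phase_doubleton[of "fst p" "snd p" "\<rho> $ fst p $ snd p" a a]
proof -
  obtain i j where p: "p = (i, j)" by fastforce
  show ?thesis
  proof (cases "i = j")
    case True
    then show ?thesis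
      by (simp add: p diag_dom_weight_def diag_dom_atom_def proj_uc_vec_singleton)
  next
    case False
    then show ?thesis
      by (auto simp: p diag_dom_weight_def diag_dom_atom_def proj_uc_vec_phase_doubleton)
  qed
qed

lemma hermitian_diag_dom_decomposition:
  assumes herm: "hermitian \<rho>"
  shows "(\<Sum>p\<in>UNIV. diag_dom_weight \<rho> p *\<^sub>R diag_dom_atom \<rho> p) = \<rho>"
proof -
  have "(\<Sum>p\<in>UNIV. of_real (diag_dom_weight \<rho> p) * diag_dom_atom \<rho> p $ a $ b) = \<rho> $ a $ b" for a b
  proof (cases "a = b")
    case False
    then show ?thesis
      using herm by (simp add: diag_dom_term_offdiag_entry sum.distrib)
  next
    case True
    have "norm (\<rho> $ i $ a) = norm (\<rho> $ a $ i)" for i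
      using herm unfolding hermitian_def by (metis complex_mod_cnj)
    then have "(\<Sum>p\<in>UNIV. of_real (diag_dom_weight \<rho> p) * diag_dom_atom \<rho> p $ a $ a)
        = of_real (diag_dom_weight \<rho> (a, a)) + of_real (\<Sum>j\<in>UNIV - {a}. norm (\<rho> $ a $ j))"
      by (simp only: diag_dom_term_diag_entry sum.distrib sum_pair_row sum_pair_column)
        (simp flip: sum_divide_distrib)
    also have "\<dots> = \<rho> $ a $ a"
    proof -
      have "Im (\<rho> $ a $ a) = 0"
        using herm unfolding hermitian_def by (metis cnj.simps(2) neg_equal_zero)
      then show ?thesis by (simp add: diag_dom_weight_def complex_eq_iff)
    qed
    finally show ?thesis using True by simp
  qed
  then show ?thesis
    by (simp add: vec_eq_iff sum_component) (simp add: scaleR_conv_of_real)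
qed

lemma diag_dominant_in_convex_hull_UC:
  assumes "hermitian \<rho>" and "mtrace \<rho> = 1" and "diag_dominant \<rho>"
  shows "\<rho> \<in> convex hull UC"
proof -
  have "(\<Sum>p\<in>UNIV. diag_dom_weight \<rho> p *\<^sub>R diag_dom_atom \<rho> p) \<in> convex hull UC"
    using assms(2,3)
    by (intro convex_sum) (simp_all add: diag_dom_weight_nonneg sum_diag_dom_weight
        diag_dom_atom_in_UC hull_inc)
  then show ?thesis
    by (simp only: hermitian_diag_dom_decomposition[OF assms(1)])
qed

lemma diag_dominant_if_norm11_le:
  fixes \<rho> :: "complex^'n::finite^'n"
  assumes "norm11 (\<rho> - mat (of_real c)) \<le> c"
  shows "diag_dominant \<rho>"
  unfolding diag_dominant_def
proof
  fix i
  let ?row = "\<lambda>i. \<Sum>j\<in>UNIV. norm ((\<rho> - mat (of_real c)) $ i $ j)"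
  have "?row i \<le> c"
    using assms Max_ge[of "range ?row" "?row i"] by (simp add: norm11_def)
  moreover have "?row i = norm (\<rho> $ i $ i - of_real c) + (\<Sum>j\<in>UNIV - {i}. norm (\<rho> $ i $ j))"
    by (simp add: sum.remove[of UNIV i] mat_def)
  moreover have "c - Re (\<rho> $ i $ i) \<le> norm (\<rho> $ i $ i - of_real c)"
    using abs_Re_le_cmod[of "\<rho> $ i $ i - of_real c"] by simp
  ultimately show "(\<Sum>j\<in>UNIV - {i}. norm (\<rho> $ i $ j)) \<le> Re (\<rho> $ i $ i)"
    by linarith
qed

theorem lemma13:
  shows "(\<forall>\<rho> :: complex^'n::finite^'n. is_state \<rho> \<and> diag_dominant \<rho> \<longrightarrow> \<rho> \<in> convex hull UC)
       \<and> (\<forall>\<rho> :: complex^'n::finite^'n. is_state \<rho> \<and>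
            norm11 (\<rho> - mat (1 / of_nat CARD('n))) \<le> 1 / real CARD('n) \<longrightarrow> \<rho> \<in> convex hull UC)"
proof -
  have "mat (1 / of_nat CARD('n)) = (mat (of_real (1 / real CARD('n))) :: complex^'n^'n)"
    by simp
  then show ?thesis
    using diag_dominant_in_convex_hull_UC diag_dominant_if_norm11_le[of _ "1 / real CARD('n)"]
    unfolding is_state_def psd_def by metis
qed

end
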